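(* Fix a cell $m^j$ of a discretized environment. Its semantic label takes values in $\mathcal{K}=\{0,1,\dots,K\}$, where $0$ means "free". Let $\mathbf{h}_{0,j}\in\mathbb{R}^{K+1}$ with $h^k_{0,j}=\log\frac{\mathbb{P}(m^j=k)}{\mathbb{P}(m^j=0)}$ be the prior log-odds vector, so $h^0_{0,j}=0$. For $t\ge 0$ let $$h^k_{t,j}=\log\frac{\mathbb{P}(m^j=k\mid \mathbf{x}_{1:t},\mathbf{P}_{1:t})}{\mathbb{P}(m^j=0\mid \mathbf{x}_{1:t},\mathbf{P}_{1:t})},\qquad k\in\mathcal{K},$$ and let $\mathbf{h}_{t,j}=[h^0_{t,j},\dots,h^K_{t,j}]^T$ be the log-odds vector at time $t$. Assume the following. - (Recurrent Bayesian update.) For every $k\in\mathcal{K}$, $$h^k_{t+1,j}=h^k_{t,j}+\log\frac{p(\mathbf{P}_{t+1}\mid m^j=k,\mathbf{x}_{t+1})}{p(\mathbf{P}_{t+1}\mid m^j=0,\mathbf{x}_{t+1})}.$$ This holds because $\mathbf{P}_{t+1}$ is conditionally independent of $\mathbf{P}_{1:t}$ given $m^j$. - (Independence of points.) The labeled points of the scan $\mathbf{P}_{t+1}=\{(\mathbf{p}_l,\mathbf{y}_l)\}_l$ are conditionally independent given $m^j$ and $\mathbf{x}_{t+1}$, i.e. $p(\mathbf{P}_{t+1}\mid m^j=k,\mathbf{x}_{t+1})=\prod_l p((\mathbf{p}_l,\mathbf{y}_l)\mid m^j=k,\mathbf{x}_{t+1})$. - (Inverse observation model.) For each labeled point $(\mathbf{p}_l,\mathbf{y}_l)$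 and robot state $\mathbf{x}$, if $m^j$ lies on the ray from $\mathbf{x}$ to $\mathbf{p}_l$, then $$\mathbb{P}(m^j=k\mid \mathbf{x},(\mathbf{p}_l,\mathbf{y}_l))=\begin{cases}\sigma^k(\mathrm{diag}(\boldsymbol{\psi}_l)\mathbf{y}_l\,\delta p_l)&\text{if }\delta p_l\le\epsilon,\\ \sigma^k(\mathbf{h}_{0,j})&\text{if }\delta p_l>\epsilon.\end{cases}$$ Here $\delta p_l=d(m^j,\mathbf{x})-\|\mathbf{p}_l\|_2$. If $m^j$ does not lie on that ray, then $\mathbb{P}(m^j=k\mid \mathbf{x},(\mathbf{p}_l,\mathbf{y}_l))=\sigma^k(\mathbf{h}_{0,j})$. Then the log-odds satisfy $$\mathbf{h}_{t+1,j}=\mathbf{h}_{t,j}+\sum_{(\mathbf{p}_l,\mathbf{y}_l)\in\mathbf{P}_{t+1}}\big[\mathbf{g}_j(\mathbf{x}_{t+1},(\mathbf{p}_l,\mathbf{y}_l))-\mathbf{h}_{0,j}\big],$$ where, for cells on the ray from $\mathbf{x}_{t+1}$ to $\mathbf{p}_l$, $$\mathbf{g}_j(\mathbf{x}_{t+1},(\mathbf{p}_l,\mathbf{y}_l))=\begin{cases}\mathrm{diag}(\boldsymbol{\psi}_l)\mathbf{y}_l\,\delta p_l&\text{if }\delta p_l\le\epsilon,\\ \mathbf{h}_{0,j}&\text{if }\delta p_l>\epsilon,\end{cases}$$ and $\mathbf{g}_j=\mathbf{h}_{0,j}$ for cells not on that ray.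
   Context: Semantic mapping setting. The environment is discretized into $J$ cells $m^1,\dots,m^J$, each with a random semantic label in $\mathcal{K}=\{0,\dots,K\}$. The robot has states $\mathbf{x}_1,\mathbf{x}_2,\dots$. At each step $t$ it observes a labeled point cloud $\mathbf{P}_t=\{(\mathbf{p}_l,\mathbf{y}_l)\}_l$. Each $\mathbf{p}_l$ is a measured location. Each $\mathbf{y}_l\in\mathbb{R}^{K+1}$ is a semantic likelihood vector supported on classes $1,\dots,K$: $y^0_l=0$, $y^k_l\ge 0$, $\sum_{k=1}^K y_l^k=1$. $d(\mathbf{x},m^j)$ is the distance from the robot position to the center of mass of cell $m^j$. $\epsilon>0$ is a truncation threshold. $\boldsymbol{\psi}_l\in\mathbb{R}^{K+1}$ are model parameters, and $\mathrm{diag}(\cdot)$ forms a diagonal matrix from a vector. $\sigma:\mathbb{R}^{K+1}\to\mathbb{R}^{K+1}$ is the softmax, $\sigma^k(\mathbf{z})=\exp(z^k)/\sum_{k'\in\mathcal{K}}\exp(z^{k'})$. It satisfies $\log(\sigma^k(\mathbf{z})/\sigma^{k'}(\mathbf{z}))=z^k-z^{k'}$. The posterior is recovered as $\mathbb{P}(m^j=k\mid\mathbf{x}_{1:t},\mathbf{P}_{1:t})=\sigma^k(\mathbf{h}_{t,j})$. *)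

theory Defs
  imports "HOL-Analysis.Analysis"
begin

text \<open>Vectors in R^(K+1) are represented as functions nat => real, indexed by the
  classes {0..K}.  Softmax over the classes {0..K}.\<close>

definition softmax :: "nat \<Rightarrow> (nat \<Rightarrow> real) \<Rightarrow> nat \<Rightarrow> real" where
  "softmax K z k = exp (z k) / (\<Sum>k'\<in>{0..K}. exp (z k'))"

definition diag_scale :: "(nat \<Rightarrow> real) \<Rightarrow> (nat \<Rightarrow> real) \<Rightarrow> real \<Rightarrow> nat \<Rightarrow> real" where
  "diag_scale psi y \<delta> = (\<lambda>k. psi k * y k * \<delta>)"

definition delta_p :: "real \<Rightarrow> 'a::real_normed_vector \<Rightarrow> real" where
  "delta_p d p = d - norm p"

text \<open>Arguments: prior log-odds h0, whether the
  cell lies on the ray from x to p_l, distance d(m^j,x), threshold eps,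
  parameters psi_l, measured point p_l, semantic likelihood y_l.\<close>
definition g_vec :: "(nat \<Rightarrow> real) \<Rightarrow> bool \<Rightarrow> real \<Rightarrow> real \<Rightarrow> (nat \<Rightarrow> real)
    \<Rightarrow> 'a::real_normed_vector \<Rightarrow> (nat \<Rightarrow> real) \<Rightarrow> nat \<Rightarrow> real" where
  "g_vec h0 onray d \<epsilon> psi p y =
     (if onray then (if delta_p d p \<le> \<epsilon> then diag_scale psi y (delta_p d p) else h0)
      else h0)"

definition inv_model :: "nat \<Rightarrow> (nat \<Rightarrow> real) \<Rightarrow> bool \<Rightarrow> real \<Rightarrow> real \<Rightarrow> (nat \<Rightarrow> real)
    \<Rightarrow> 'a::real_normed_vector \<Rightarrow> (nat \<Rightarrow> real) \<Rightarrow> nat \<Rightarrow> real" where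
  "inv_model K h0 onray d \<epsilon> psi p y k =
     (if onray then (if delta_p d p \<le> \<epsilon> then softmax K (diag_scale psi y (delta_p d p)) k
                     else softmax K h0 k)
      else softmax K h0 k)"

end

theory Submission
  imports Defs
begin

text \<open>Bayes' rule on a single point makes its log-likelihood ratio the difference between
  the posterior and prior log-odds. The inverse observation model gives the posterior as a
  softmax of g_j, whose log-odds are read off directly since g_j has a vanishing 0-th entry.
  The scan likelihood factorises over the points, so its log-ratio is the sum of these
  differences.\<close>

lemma ln_softmax_ratio: "ln (softmax K z k / softmax K z i) = z k - z i"
proof -
  have "(\<Sum>k'\<in>{0..K}. exp (z k')) > 0"
    by (rule sum_pos) auto
  then show ?thesis
    by (simp add: softmax_def exp_diff[symmetric])
qed

lemma bayes_log_odds: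
  fixes a p :: "'k \<Rightarrow> real"
  assumes "finite A" and a_pos: "\<forall>k\<in>A. a k > 0" and p_pos: "\<forall>k\<in>A. p k > 0"
    and "k \<in> A" "i \<in> A"
    and q: "\<forall>k\<in>A. q k = a k * p k / (\<Sum>k'\<in>A. a k' * p k')"
  shows "ln (q k / q i) = ln (a k / a i) + ln (p k / p i)"
proof -
  have "(\<Sum>k'\<in>A. a k' * p k') > 0"
    by (rule sum_pos) (use assms in auto)
  then have "q k / q i = (a k / a i) * (p k / p i)"
    using q \<open>k \<in> A\<close> \<open>i \<in> A\<close> by simp
  moreover have "a k / a i > 0" "p k / p i > 0"
    using assms by auto
  ultimately show ?thesis
    by (simp only: ln_mult_pos)
qed

lemma ln_prod_divide:
  fixes a b :: "'l \<Rightarrow> real"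
  assumes "finite L" "\<forall>l\<in>L. a l > 0" "\<forall>l\<in>L. b l > 0"
  shows "ln ((\<Prod>l\<in>L. a l) / (\<Prod>l\<in>L. b l)) = (\<Sum>l\<in>L. ln (a l / b l))"
proof -
  have "ln ((\<Prod>l\<in>L. a l) / (\<Prod>l\<in>L. b l)) = ln (\<Prod>l\<in>L. a l / b l)"
    by (simp add: prod_dividef)
  also have "\<dots> = (\<Sum>l\<in>L. ln (a l / b l))"
    by (rule ln_prod) (use assms in auto)
  finally show ?thesis .
qed

lemma inv_model_eq_softmax_g_vec:
  "inv_model K h0 onray d \<epsilon> psi p y = softmax K (g_vec h0 onray d \<epsilon> psi p y)"
  by (auto simp: inv_model_def g_vec_def)

lemma g_vec_free_class:
  assumes "h0 0 = 0" "y 0 = 0"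
  shows "g_vec h0 onray d \<epsilon> psi p y 0 = 0"
  using assms by (simp add: g_vec_def diag_scale_def)

theorem proposition1:
  fixes K :: nat
    and prior :: "nat \<Rightarrow> real"          \<comment> \<open>P(m^j = k)\<close>
    and h0 :: "nat \<Rightarrow> real"             \<comment> \<open>prior log-odds h_{0,j}\<close>
    and post :: "nat \<Rightarrow> nat \<Rightarrow> real"    \<comment> \<open>post s k = P(m^j = k | x_{1:s}, P_{1:s})\<close>
    and h :: "nat \<Rightarrow> nat \<Rightarrow> real"       \<comment> \<open>h s k = h^k_{s,j}\<close>
    and t :: nat
    and L :: "'l set"                    \<comment> \<open>indices of the points of the scan P_{t+1}\<close>
    and pt :: "'l \<Rightarrow> 'a::real_normed_vector"  \<comment> \<open>measured locations p_l\<close>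
    and y :: "'l \<Rightarrow> nat \<Rightarrow> real"       \<comment> \<open>semantic likelihood vectors y_l\<close>
    and psi :: "'l \<Rightarrow> nat \<Rightarrow> real"     \<comment> \<open>model parameters psi_l\<close>
    and onray :: "'l \<Rightarrow> bool"          \<comment> \<open>m^j lies on the ray from x_{t+1} to p_l\<close>
    and d :: real                        \<comment> \<open>d(m^j, x_{t+1})\<close>
    and \<epsilon> :: real
    and lik :: "'l \<Rightarrow> nat \<Rightarrow> real"     \<comment> \<open>p((p_l,y_l) | m^j = k, x_{t+1})\<close>
    and scanlik :: "nat \<Rightarrow> real"        \<comment> \<open>p(P_{t+1} | m^j = k, x_{t+1})\<close>
    and ptpost :: "'l \<Rightarrow> nat \<Rightarrow> real"  \<comment> \<open>P(m^j = k | x_{t+1}, (p_l,y_l))\<close>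
  assumes prior_pos: "\<forall>k\<in>{0..K}. prior k > 0"
    and prior_sum: "(\<Sum>k\<in>{0..K}. prior k) = 1"
    and h0_def: "\<forall>k\<in>{0..K}. h0 k = ln (prior k / prior 0)"
    and post_pos: "\<forall>s. \<forall>k\<in>{0..K}. post s k > 0"
    and h_def: "\<forall>s. \<forall>k\<in>{0..K}. h s k = ln (post s k / post s 0)"
    and eps_pos: "\<epsilon> > 0"
    and L_fin: "finite L"
    and y0: "\<forall>l\<in>L. y l 0 = 0"
    and y_nonneg: "\<forall>l\<in>L. \<forall>k\<in>{1..K}. y l k \<ge> 0"
    and y_sum: "\<forall>l\<in>L. (\<Sum>k\<in>{1..K}. y l k) = 1"
    and update: "\<forall>k\<in>{0..K}. h (Suc t) k = h t k + ln (scanlik k / scanlik 0)"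
    and lik_pos: "\<forall>l\<in>L. \<forall>k\<in>{0..K}. lik l k > 0"
    and indep: "\<forall>k\<in>{0..K}. scanlik k = (\<Prod>l\<in>L. lik l k)"
    and bayes: "\<forall>l\<in>L. \<forall>k\<in>{0..K}.
                  ptpost l k = lik l k * prior k / (\<Sum>k'\<in>{0..K}. lik l k' * prior k')"
    and inverse_model: "\<forall>l\<in>L. \<forall>k\<in>{0..K}.
                  ptpost l k = inv_model K h0 (onray l) d \<epsilon> (psi l) (pt l) (y l) k"
  shows "\<forall>k\<in>{0..K}. h (Suc t) k =
           h t k + (\<Sum>l\<in>L. g_vec h0 (onray l) d \<epsilon> (psi l) (pt l) (y l) k - h0 k)"
proof
  fix k assume k: "k \<in> {0..K}"
  have free: "(0::nat) \<in> {0..K}" by simp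
  define g where "g l = g_vec h0 (onray l) d \<epsilon> (psi l) (pt l) (y l)" for l
  have point_ratio: "ln (lik l k / lik l 0) = g l k - h0 k" if l: "l \<in> L" for l
  proof -
    have "ln (ptpost l k / ptpost l 0) = ln (lik l k / lik l 0) + ln (prior k / prior 0)"
      by (rule bayes_log_odds) (use l k lik_pos prior_pos bayes in auto)
    moreover have "ln (ptpost l k / ptpost l 0) = g l k - g l 0"
      using inverse_model l k free
      by (simp add: g_def inv_model_eq_softmax_g_vec ln_softmax_ratio)
    moreover have "g l 0 = 0"
      unfolding g_def by (rule g_vec_free_class) (use h0_def prior_pos y0 l in auto)
    ultimately show ?thesis
      using h0_def k by simp
  qed
  have "ln (scanlik k / scanlik 0) = (\<Sum>l\<in>L. ln (lik l k / lik l 0))"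
    using indep k free by (simp add: ln_prod_divide L_fin lik_pos)
  also have "\<dots> = (\<Sum>l\<in>L. g l k - h0 k)"
    by (rule sum.cong) (simp_all add: point_ratio)
  finally show "h (Suc t) k = h t k + (\<Sum>l\<in>L. g_vec h0 (onray l) d \<epsilon> (psi l) (pt l) (y l) k - h0 k)"
    using update k by (simp add: g_def)
qed

end
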